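(* Let $T$ be a nonabelian finite simple group and let $A,B$ be proper subgroups of $T$ with $T=AB$. Let $M=T^2$, $G=T\wr S_2=M\rtimes S_2$ (with $S_2$ swapping coordinates), $K_1=A\times B$ and $K_2=B\times A$. Then $K_1\cap K_2=(A\cap B)\times(A\cap B)$ is normalised by $S_2$; $G$ acts transitively on the coset space $\Omega$ of $H=(K_1\cap K_2)\rtimes S_2$, with $M$ a transitive minimal normal subgroup; and for $\omega=H$: (a) $\{K_1,K_2\}$ is a Cartesian system of subgroups in $M$ with respect to $\omega$ which is not $M$-normal and has $|\mathcal F_i|=2$; (b) $\{(A\cap B)\times T,\ T\times(A\cap B)\}$ is also a Cartesian system of subgroups in $M$ with respect to $\omega$, and it is $M$-normal.
   Context: For $G$ innately transitive on $\Omega$ (i.e. with a transitive minimal normal subgroup, a plinth) with plinth $M$ and $\omega\in\Omega$, a Cartesian system of subgroups in $M$ with respect to $\omega$ is a $G_\omega$-conjugation-invariant set $\{K_1,\ldots,K_\ell\}$ of subgroups of $M$ with $\bigcap_i K_i=M_\omega$ and $K_i\bigl(\bigcap_{j\ne i}K_j\bigr)=M$ for all $i$. It is $M$-normal if there are normal subgroups $M_1,\ldots,M_\ell$ of $M$ with $M=M_1\times\cdots\times M_\ell$ and $K_i=(M_i\cap M_\omega)\times\prod_{j\ne i}M_j$ for all $i$. For $M=T_1\times\cdots\times T_k$ with simple factors $T_i$ and projections $\sigma_i:M\to T_i$, $\mathcal F_i=\{\sigma_i(K_j):\sigma_i(K_j)\ne T_i\}$. *)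

theory Defs
  imports "HOL-Algebra.Algebra" "HOL-Algebra.Left_Coset"
begin

text \<open>An element ((x,y),s) stands for
  (x,y) * sigma^s, where sigma is the swap (s = True means sigma is present).\<close>

definition wreath2 :: "('a, 'b) monoid_scheme \<Rightarrow> (('a \<times> 'a) \<times> bool) monoid" where
  "wreath2 T =
     \<lparr> carrier = (carrier T \<times> carrier T) \<times> UNIV,
       monoid.mult = (\<lambda>((x1, y1), s) ((x2, y2), t).
          ((if s then (x1 \<otimes>\<^bsub>T\<^esub> y2, y1 \<otimes>\<^bsub>T\<^esub> x2)
                 else (x1 \<otimes>\<^bsub>T\<^esub> x2, y1 \<otimes>\<^bsub>T\<^esub> y2)), s \<noteq> t)),
       one = ((\<one>\<^bsub>T\<^esub>, \<one>\<^bsub>T\<^esub>), False) \<rparr>"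

definition base2 :: "('a, 'b) monoid_scheme \<Rightarrow> (('a \<times> 'a) \<times> bool) set" where
  "base2 T = (carrier T \<times> carrier T) \<times> {False}"

definition swap2 :: "('a, 'b) monoid_scheme \<Rightarrow> ('a \<times> 'a) \<times> bool" where
  "swap2 T = ((\<one>\<^bsub>T\<^esub>, \<one>\<^bsub>T\<^esub>), True)"

definition bprod :: "'a set \<Rightarrow> 'a set \<Rightarrow> (('a \<times> 'a) \<times> bool) set" where
  "bprod P Q = Sigma (Sigma P (\<lambda>_. Q)) (\<lambda>_. {False})"

definition coset_action :: "('g, 'c) monoid_scheme \<Rightarrow> 'g set \<Rightarrow> 'g \<Rightarrow> 'g set \<Rightarrow> 'g set" where
  "coset_action G H g = (\<lambda>C \<in> lcosets\<^bsub>G\<^esub> H. g <#\<^bsub>G\<^esub> C)"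

definition minimal_normal :: "'g set \<Rightarrow> ('g, 'c) monoid_scheme \<Rightarrow> bool" where
  "minimal_normal N G \<longleftrightarrow> N \<lhd> G \<and> N \<noteq> {\<one>\<^bsub>G\<^esub>} \<and>
     (\<forall>L. L \<lhd> G \<and> L \<subseteq> N \<longrightarrow> L = {\<one>\<^bsub>G\<^esub>} \<or> L = N)"

definition transitive_on :: "'g set \<Rightarrow> 'x set \<Rightarrow> ('g \<Rightarrow> 'x \<Rightarrow> 'x) \<Rightarrow> bool" where
  "transitive_on N E \<phi> \<longleftrightarrow> (\<forall>x\<in>E. \<forall>y\<in>E. \<exists>n\<in>N. \<phi> n x = y)"

text \<open>The set of subgroups {K_1,...,K_l} is represented as a
  finite set of subgroups; M_w = M \<inter> G_w.\<close>
definition cartesian_system ::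
  "('g, 'c) monoid_scheme \<Rightarrow> ('g \<Rightarrow> 'x \<Rightarrow> 'x) \<Rightarrow> 'g set \<Rightarrow> 'x \<Rightarrow> 'g set set \<Rightarrow> bool" where
  "cartesian_system G \<phi> M w \<K> \<longleftrightarrow>
     finite \<K> \<and> \<K> \<noteq> {} \<and>
     (\<forall>K\<in>\<K>. subgroup K G \<and> K \<subseteq> M) \<and>
     (\<forall>g\<in>stabilizer G \<phi> w. \<forall>K\<in>\<K>. (\<lambda>k. g \<otimes>\<^bsub>G\<^esub> k \<otimes>\<^bsub>G\<^esub> inv\<^bsub>G\<^esub> g) ` K \<in> \<K>) \<and>
     \<Inter>\<K> = M \<inter> stabilizer G \<phi> w \<and>
     (\<forall>K\<in>\<K>. K <#>\<^bsub>G\<^esub> (M \<inter> \<Inter>(\<K> - {K})) = M)"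

text \<open>M-normality: there are normal subgroups M_i of M (one for each K_i) such that
  M is the internal direct product of the M_i and
  K_i = (M_i \<inter> M_w) x prod_{j \<noteq> i} M_j.  The product of the M_j (j \<noteq> i), which
  pairwise commute, is the subgroup they generate.\<close>
definition M_normal ::
  "('g, 'c) monoid_scheme \<Rightarrow> ('g \<Rightarrow> 'x \<Rightarrow> 'x) \<Rightarrow> 'g set \<Rightarrow> 'x \<Rightarrow> 'g set set \<Rightarrow> bool" where
  "M_normal G \<phi> M w \<K> \<longleftrightarrow>
     (\<exists>N :: 'g set \<Rightarrow> 'g set.
        (\<forall>K\<in>\<K>. N K \<subseteq> M \<and> N K \<lhd> (G\<lparr>carrier := M\<rparr>)) \<and>
        generate G (\<Union>K\<in>\<K>. N K) = M \<and>
        (\<forall>K\<in>\<K>. N K \<inter> generate G (\<Union>K'\<in>\<K> - {K}. N K') = {\<one>\<^bsub>G\<^esub>}) \<and>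
        (\<forall>K\<in>\<K>. K = (N K \<inter> (M \<inter> stabilizer G \<phi> w)) <#>\<^bsub>G\<^esub>
                       generate G (\<Union>K'\<in>\<K> - {K}. N K')))"

end

theory Submission
  imports Defs
begin

text \<open>
  Since \<open>H\<close> contains the swap, the base group
  \<open>M = T \<times> T\<close> is already transitive, and its point stabiliser is \<open>(A \<inter> B)\<^sup>2\<close>.
  Both families are of the shape \<open>{P \<times> Q, Q \<times> P}\<close> with \<open>P \<inter> Q = A \<inter> B\<close> and
  \<open>PQ = T\<close>, which yields the Cartesian system axioms at once; conjugation by an
  element of \<open>H\<close> either fixes or swaps the two members.

  For \<open>T\<close> simple, a normal subgroup of \<open>M\<close> contained in \<open>P \<times> Q\<close> with \<open>P, Q\<close>
  proper is trivial, because its coordinate projections are normal in \<open>T\<close>. An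
  \<open>M\<close>-normal decomposition of \<open>{A \<times> B, B \<times> A}\<close> would put each factor inside the
  other member, so both factors would be trivial. For the second family the
  coordinate factors \<open>T \<times> 1\<close> and \<open>1 \<times> T\<close> do the job.

  Minimality of \<open>M\<close> uses that \<open>T\<close> is nonabelian: a normal subgroup of the wreath
  product containing \<open>(a, b)\<close> with \<open>a \<noteq> 1\<close> (after swapping) also contains the
  commutator \<open>([a, t], 1) \<noteq> 1\<close> for some \<open>t\<close>, so its first coordinate part is a
  nontrivial normal subgroup of \<open>T\<close>, hence all of \<open>T\<close>.
\<close>

lemma set_mult_memI:
  fixes G (structure)
  shows "h \<in> H \<Longrightarrow> k \<in> K \<Longrightarrow> h \<otimes> k \<in> H <#> K"
  by (auto simp: set_mult_def)

context group
begin

lemma set_mult_one_right: "H \<subseteq> carrier G \<Longrightarrow> H <#> {\<one>} = H"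
  by (simp add: coset_mult_one flip: r_coset_eq_set_mult)

lemma set_mult_one_left: "H \<subseteq> carrier G \<Longrightarrow> {\<one>} <#> H = H"
  by (simp add: lcos_mult_one flip: l_coset_eq_set_mult)

lemma set_mult_Int_Inter_other:
  assumes M: "subgroup M G" and "K \<subseteq> M" "K' \<subseteq> M" and KK': "K <#> K' = M"
  shows "K <#> (M \<inter> \<Inter>({K, K'} - {K})) = M"
proof
  have "K <#> (M \<inter> \<Inter>({K, K'} - {K})) \<subseteq> M <#> M"
    by (rule mono_set_mult) (use \<open>K \<subseteq> M\<close> in auto)
  then show "K <#> (M \<inter> \<Inter>({K, K'} - {K})) \<subseteq> M"
    using subgroup_mult_id[OF M] by simp
  have "K <#> K' \<subseteq> K <#> (M \<inter> \<Inter>({K, K'} - {K}))"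
    by (rule mono_set_mult) (use \<open>K' \<subseteq> M\<close> in auto)
  then show "M \<subseteq> K <#> (M \<inter> \<Inter>({K, K'} - {K}))"
    using KK' by simp
qed

lemma generate_subgroup_eq: "subgroup H G \<Longrightarrow> generate G H = H"
  by (rule generateI[symmetric]) auto

lemma commutator_eq_one_iff:
  assumes "a \<in> carrier G" "t \<in> carrier G"
  shows "a \<otimes> (t \<otimes> inv a \<otimes> inv t) = \<one> \<longleftrightarrow> a \<otimes> t = t \<otimes> a"
  using assms by (simp add: inv_solve_right' flip: m_assoc)

lemma lcos_eq_self_iff:
  assumes "subgroup H G" "g \<in> carrier G"
  shows "g <# H = H \<longleftrightarrow> g \<in> H"
proof
  assume "g <# H = H"
  then show "g \<in> H"
    using lcos_self[OF assms(2,1)] by simp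
next
  assume "g \<in> H"
  then have "\<one> <# H = g <# H"
    using assms by (intro l_repr_independence) (simp_all add: lcos_mult_one subgroup.subset)
  then show "g <# H = H"
    using assms(1) by (simp add: lcos_mult_one subgroup.subset)
qed

lemma lcos_mem_lcosets:
  assumes "subgroup H G" "g \<in> carrier G" "C \<in> lcosets H"
  shows "g <# C \<in> lcosets H"
proof -
  obtain a where "a \<in> carrier G" "C = a <# H"
    using assms(3) by (auto simp: LCOSETS_def)
  then show ?thesis
    using assms lcos_m_assoc[OF subgroup.subset] by (auto simp: LCOSETS_def)
qed

lemma coset_action_group_action:
  assumes H: "subgroup H G"
  shows "group_action G (lcosets H) (coset_action G H)"
proof -
  have sub: "C \<subseteq> carrier G" if "C \<in> lcosets H" for C
    using that subgroup.lcosets_carrier[OF H] by auto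
  have act_mult: "g <# (h <# C) = (g \<otimes> h) <# C"
    if "g \<in> carrier G" "h \<in> carrier G" "C \<in> lcosets H" for g h C
    using that by (simp add: lcos_m_assoc sub)
  have bij: "coset_action G H g \<in> Bij (lcosets H)" if g: "g \<in> carrier G" for g
  proof -
    have "bij_betw (\<lambda>C. g <# C) (lcosets H) (lcosets H)"
      by (rule bij_betwI[where g = "\<lambda>C. inv g <# C"])
         (use g H in \<open>auto simp: lcos_mem_lcosets act_mult lcos_mult_one sub\<close>)
    then show ?thesis
      unfolding Bij_def coset_action_def by (simp add: bij_betw_restrict_eq)
  qed
  show ?thesis
    unfolding group_action_def group_hom_def
  proof (intro conjI is_group group_BijGroup group_hom_axioms.intro homI)
    fix g h assume "g \<in> carrier G" "h \<in> carrier G"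
    then show "coset_action G H (g \<otimes> h) =
        coset_action G H g \<otimes>\<^bsub>BijGroup (lcosets H)\<^esub> coset_action G H h"
      using bij unfolding BijGroup_def coset_action_def compose_def
      by (intro ext) (auto simp: lcos_mem_lcosets[OF H] act_mult)
  qed (simp add: BijGroup_def bij)
qed

lemma stabilizer_coset_action:
  assumes "subgroup H G"
  shows "stabilizer G (coset_action G H) H = H"
proof -
  have "H \<in> lcosets H"
    using assms lcos_mult_one[OF subgroup.subset] by (force simp: LCOSETS_def)
  then have "stabilizer G (coset_action G H) H = {g \<in> carrier G. g <# H = H}"
    by (simp add: stabilizer_def coset_action_def)
  also have "\<dots> = {g \<in> carrier G. g \<in> H}"
    using lcos_eq_self_iff[OF assms] by blast
  also have "\<dots> = H"
    using subgroup.subset[OF assms] by blast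
  finally show ?thesis .
qed

lemma coset_action_transitive_on:
  assumes H: "subgroup H G" and N: "subgroup N G" and NH: "N <#> H = carrier G"
  shows "transitive_on N (lcosets H) (coset_action G H)"
  unfolding transitive_on_def
proof (intro ballI)
  have rep: "\<exists>n\<in>N. C = n <# H" if C: "C \<in> lcosets H" for C
  proof -
    obtain g where g: "g \<in> carrier G" "C = g <# H"
      using C unfolding LCOSETS_def by blast
    then obtain n h where nh: "n \<in> N" "h \<in> H" "g = n \<otimes> h"
      using NH unfolding set_mult_def by blast
    have "C = n <# (h <# H)"
      using g nh lcos_m_assoc[OF subgroup.subset[OF H]]
        subgroup.mem_carrier[OF N nh(1)] subgroup.mem_carrier[OF H nh(2)] by simp
    also have "h <# H = H"
      using lcos_eq_self_iff[OF H subgroup.mem_carrier[OF H nh(2)]] nh(2) by simp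
    finally show ?thesis
      using nh(1) by blast
  qed
  fix C D assume C: "C \<in> lcosets H" and D: "D \<in> lcosets H"
  obtain m where m: "m \<in> N" "C = m <# H"
    using rep[OF C] by blast
  obtain n where n: "n \<in> N" "D = n <# H"
    using rep[OF D] by blast
  have mn: "m \<in> carrier G" "n \<in> carrier G"
    using subgroup.mem_carrier[OF N m(1)] subgroup.mem_carrier[OF N n(1)] by auto
  have "coset_action G H (n \<otimes> inv m) C = D"
    using C m n mn lcos_m_assoc[OF subgroup.subset[OF H]]
    by (simp add: coset_action_def m_assoc)
  moreover have "n \<otimes> inv m \<in> N"
    using m n N by (simp add: subgroup.m_closed subgroup.m_inv_closed)
  ultimately show "\<exists>g\<in>N. coset_action G H g C = D" by blast
qed

lemma coset_action_transitive:
  assumes "subgroup H G"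
  shows "transitive_action G (lcosets H) (coset_action G H)"
  using coset_action_group_action[OF assms]
    coset_action_transitive_on[OF assms subgroup_self set_mult_carrier_idem[OF assms]]
  by (simp add: transitive_action_def transitive_action_axioms_def transitive_on_def)

lemma set_mult_eq_carrier_commute:
  assumes P: "subgroup P G" and Q: "subgroup Q G" and PQ: "P <#> Q = carrier G"
  shows "Q <#> P = carrier G"
proof
  show "Q <#> P \<subseteq> carrier G"
    using P Q by (simp add: setmult_subset_G subgroup.subset)
  show "carrier G \<subseteq> Q <#> P"
  proof
    fix g assume g: "g \<in> carrier G"
    then obtain p q where pq: "p \<in> P" "q \<in> Q" "inv g = p \<otimes> q"
      using PQ inv_closed[OF g] unfolding set_mult_def by blast
    have "g = inv (p \<otimes> q)"
      using g by (simp flip: pq(3))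
    also have "\<dots> = inv q \<otimes> inv p"
      using pq P Q by (simp add: inv_mult_group subgroup.mem_carrier)
    finally have "g = inv q \<otimes> inv p" .
    then show "g \<in> Q <#> P"
      using pq P Q by (simp add: set_mult_memI subgroup.m_inv_closed)
  qed
qed

lemma subgroup_set_mult_carrier: "subgroup H G \<Longrightarrow> H <#> carrier G = carrier G"
  using set_mult_eq_carrier_commute[OF subgroup_self _ set_mult_carrier_idem] by blast

lemma conj_image_eqI:
  assumes "g \<in> carrier G" "U \<subseteq> carrier G" "V \<subseteq> carrier G"
    and "(\<lambda>k. g \<otimes> k \<otimes> inv g) ` U \<subseteq> V"
    and "(\<lambda>k. inv g \<otimes> k \<otimes> g) ` V \<subseteq> U"
  shows "(\<lambda>k. g \<otimes> k \<otimes> inv g) ` U = V"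
proof
  show "V \<subseteq> (\<lambda>k. g \<otimes> k \<otimes> inv g) ` U"
  proof
    fix v assume "v \<in> V"
    then have "inv g \<otimes> v \<otimes> g \<in> U" "v = g \<otimes> (inv g \<otimes> v \<otimes> g) \<otimes> inv g"
      using assms by (auto simp add: m_assoc simp flip: m_assoc[of g "inv g"])
    then show "v \<in> (\<lambda>k. g \<otimes> k \<otimes> inv g) ` U" by blast
  qed
qed (fact assms(4))

end

definition center :: "('a, 'b) monoid_scheme \<Rightarrow> 'a set" where
  "center G = {z \<in> carrier G. \<forall>y\<in>carrier G. z \<otimes>\<^bsub>G\<^esub> y = y \<otimes>\<^bsub>G\<^esub> z}"

lemma (in group) center_normal: "center G \<lhd> G"
proof (rule normal_invI)
  show "subgroup (center G) G"
  proof (rule subgroupI)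
    fix z w assume z: "z \<in> center G" and w: "w \<in> center G"
    then show "inv z \<in> center G"
      by (simp add: center_def inv_solve_left inv_solve_right m_assoc)
    have zc: "z \<in> carrier G" and wc: "w \<in> carrier G"
      using z w by (auto simp: center_def)
    have "z \<otimes> w \<otimes> y = y \<otimes> (z \<otimes> w)" if y: "y \<in> carrier G" for y
    proof -
      have "z \<otimes> w \<otimes> y = z \<otimes> (y \<otimes> w)"
        using w y zc wc by (simp add: center_def m_assoc)
      also have "\<dots> = z \<otimes> y \<otimes> w"
        using y zc wc by (simp add: m_assoc)
      also have "\<dots> = y \<otimes> z \<otimes> w"
        using z y by (simp add: center_def)
      also have "\<dots> = y \<otimes> (z \<otimes> w)"
        using y zc wc by (simp add: m_assoc)
      finally show ?thesis .
    qed
    then show "z \<otimes> w \<in> center G"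
      using zc wc unfolding center_def by blast
  qed (auto simp: center_def)
next
  fix x z assume x: "x \<in> carrier G" and z: "z \<in> center G"
  then have "z \<in> carrier G" "x \<otimes> z = z \<otimes> x"
    by (auto simp: center_def)
  then have "x \<otimes> z \<otimes> inv x = z"
    using x by (simp add: m_assoc)
  with z show "x \<otimes> z \<otimes> inv x \<in> center G"
    by simp
qed

lemma (in simple_group) center_trivial:
  assumes "\<not> comm_group G"
  shows "center G = {\<one>}"
proof -
  have "center G \<noteq> carrier G"
  proof
    assume "center G = carrier G"
    then have "comm_group G"
      by (intro group_comm_groupI) (auto simp: center_def)
    with assms show False ..
  qed
  then show ?thesis
    using no_real_normal_subgroup[OF center_normal] by blast
qed

section \<open>The wreath product T wr S_2\<close>

lemma wreath2_carrier [simp]: "carrier (wreath2 T) = (carrier T \<times> carrier T) \<times> UNIV"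
  by (simp add: wreath2_def)

lemma wreath2_one [simp]: "\<one>\<^bsub>wreath2 T\<^esub> = ((\<one>\<^bsub>T\<^esub>, \<one>\<^bsub>T\<^esub>), False)"
  by (simp add: wreath2_def)

lemma wreath2_mult [simp]:
  "((x1, y1), s) \<otimes>\<^bsub>wreath2 T\<^esub> ((x2, y2), t) =
     ((if s then (x1 \<otimes>\<^bsub>T\<^esub> y2, y1 \<otimes>\<^bsub>T\<^esub> x2) else (x1 \<otimes>\<^bsub>T\<^esub> x2, y1 \<otimes>\<^bsub>T\<^esub> y2)), s \<noteq> t)"
  by (simp add: wreath2_def)

lemma mem_bprod [simp]: "((a, b), s) \<in> bprod P Q \<longleftrightarrow> a \<in> P \<and> b \<in> Q \<and> \<not> s"
  by (auto simp: bprod_def)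

lemma base2_eq_bprod: "base2 T = bprod (carrier T) (carrier T)"
  by (auto simp: base2_def bprod_def)

lemma bprod_Int: "bprod P Q \<inter> bprod P' Q' = bprod (P \<inter> P') (Q \<inter> Q')"
  by (auto simp: bprod_def)

lemma image_fst_bprod: "Q \<noteq> {} \<Longrightarrow> (\<lambda>x. fst (fst x)) ` bprod P Q = P"
  by (force simp: bprod_def)

lemma image_snd_bprod: "P \<noteq> {} \<Longrightarrow> (\<lambda>x. snd (fst x)) ` bprod P Q = Q"
  by (force simp: bprod_def)

lemma bprod_swap_eq_iff: "P \<noteq> {} \<Longrightarrow> Q \<noteq> {} \<Longrightarrow> bprod P Q = bprod Q P \<longleftrightarrow> P = Q"
  by (metis image_fst_bprod)

lemma card_proper_images_doubleton:
  assumes "f ` K1 = U" "f ` K2 = V" "U \<noteq> S" "V \<noteq> S" "U \<noteq> V"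
  shows "card {f ` K | K. K \<in> {K1, K2} \<and> f ` K \<noteq> S} = 2"
proof -
  have "{f ` K | K. K \<in> {K1, K2} \<and> f ` K \<noteq> S} = {U, V}"
    using assms by auto
  then show ?thesis
    using assms(5) by simp
qed

lemma card_coordinate_images:
  fixes A B :: "'a set"
  assumes "A \<noteq> {}" "B \<noteq> {}" "A \<noteq> S" "B \<noteq> S" "A \<noteq> B"
  shows "card {(\<lambda>x :: ('a \<times> 'a) \<times> bool. fst (fst x)) ` K | K.
              K \<in> {bprod A B, bprod B A} \<and> (\<lambda>x :: ('a \<times> 'a) \<times> bool. fst (fst x)) ` K \<noteq> S} = 2"
    and "card {(\<lambda>x :: ('a \<times> 'a) \<times> bool. snd (fst x)) ` K | K.
              K \<in> {bprod A B, bprod B A} \<and> (\<lambda>x :: ('a \<times> 'a) \<times> bool. snd (fst x)) ` K \<noteq> S} = 2"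
  by (rule card_proper_images_doubleton[OF image_fst_bprod[OF assms(2)] image_fst_bprod[OF assms(1)]
        assms(3-5)])
     (rule card_proper_images_doubleton[OF image_snd_bprod[OF assms(1)] image_snd_bprod[OF assms(2)]
        assms(4,3) assms(5)[symmetric]])

definition sub_wreath2 :: "'a set \<Rightarrow> (('a \<times> 'a) \<times> bool) set" where
  "sub_wreath2 C = (C \<times> C) \<times> UNIV"

lemma mem_sub_wreath2 [simp]: "((a, b), s) \<in> sub_wreath2 C \<longleftrightarrow> a \<in> C \<and> b \<in> C"
  by (simp add: sub_wreath2_def)

lemma (in group) group_wreath2: "group (wreath2 G)"
proof (rule groupI)
  fix x assume "x \<in> carrier (wreath2 G)"
  then obtain a b s where x: "x = ((a, b), s)" "a \<in> carrier G" "b \<in> carrier G"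
    by auto
  show "\<exists>y\<in>carrier (wreath2 G). y \<otimes>\<^bsub>wreath2 G\<^esub> x = \<one>\<^bsub>wreath2 G\<^esub>"
    using x by (intro bexI[of _ "if s then ((inv b, inv a), True) else ((inv a, inv b), False)"]) auto
qed (auto simp: m_assoc)

lemma (in group) wreath2_inv [simp]:
  assumes "a \<in> carrier G" "b \<in> carrier G"
  shows "inv\<^bsub>wreath2 G\<^esub> ((a, b), s) = (if s then ((inv b, inv a), True) else ((inv a, inv b), False))"
  using assms by (intro group.inv_equality[OF group_wreath2]) auto

abbreviation base2_group :: "('a, 'b) monoid_scheme \<Rightarrow> (('a \<times> 'a) \<times> bool) monoid" where
  "base2_group T \<equiv> (wreath2 T)\<lparr>carrier := base2 T\<rparr>"

locale wreath2_group = T: group T for T :: "('a, 'b) monoid_scheme" (structure)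
begin

abbreviation W :: "(('a \<times> 'a) \<times> bool) monoid" where
  "W \<equiv> wreath2 T"

sublocale W: group W
  by (rule T.group_wreath2)

lemma swap2_carrier [simp]: "swap2 T \<in> carrier W"
  by (simp add: swap2_def)

lemma conj_swap2 [simp]:
  "a \<in> carrier T \<Longrightarrow> b \<in> carrier T \<Longrightarrow>
     swap2 T \<otimes>\<^bsub>W\<^esub> ((a, b), False) \<otimes>\<^bsub>W\<^esub> inv\<^bsub>W\<^esub> swap2 T = ((b, a), False)"
  by (simp add: swap2_def)

lemma subgroup_bprod:
  assumes P: "subgroup P T" and Q: "subgroup Q T"
  shows "subgroup (bprod P Q) W"
proof (rule W.subgroupI)
  show "bprod P Q \<subseteq> carrier W"
    using subgroup.subset[OF P] subgroup.subset[OF Q] by (auto simp: bprod_def)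
  show "bprod P Q \<noteq> {}"
    using subgroup.one_closed[OF P] subgroup.one_closed[OF Q] by (auto simp: bprod_def)
next
  fix x y assume "x \<in> bprod P Q" "y \<in> bprod P Q"
  then show "inv\<^bsub>W\<^esub> x \<in> bprod P Q" "x \<otimes>\<^bsub>W\<^esub> y \<in> bprod P Q"
    using P Q by (auto simp: bprod_def subgroup.mem_carrier subgroup.m_inv_closed subgroup.m_closed)
qed

lemma subgroup_base2: "subgroup (base2 T) W"
  unfolding base2_eq_bprod by (intro subgroup_bprod T.subgroup_self)

lemma group_base2_group: "group (base2_group T)"
  by (rule W.subgroup_imp_group[OF subgroup_base2])

lemma normal_base2: "base2 T \<lhd> W"
proof (rule W.normal_invI[OF subgroup_base2])
  fix x h assume "x \<in> carrier W" "h \<in> base2 T"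
  then show "x \<otimes>\<^bsub>W\<^esub> h \<otimes>\<^bsub>W\<^esub> inv\<^bsub>W\<^esub> x \<in> base2 T"
    by (auto simp: base2_def)
qed

lemma subgroup_sub_wreath2:
  assumes C: "subgroup C T"
  shows "subgroup (sub_wreath2 C) W"
proof (rule W.subgroupI)
  show "sub_wreath2 C \<subseteq> carrier W" "sub_wreath2 C \<noteq> {}"
    using subgroup.subset[OF C] subgroup.one_closed[OF C] by (auto simp: sub_wreath2_def)
next
  fix x y assume "x \<in> sub_wreath2 C" "y \<in> sub_wreath2 C"
  then show "inv\<^bsub>W\<^esub> x \<in> sub_wreath2 C" "x \<otimes>\<^bsub>W\<^esub> y \<in> sub_wreath2 C"
    using C by (auto simp: sub_wreath2_def subgroup.mem_carrier subgroup.m_inv_closed subgroup.m_closed)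
qed

lemma bprod_set_mult:
  "bprod P Q <#>\<^bsub>W\<^esub> bprod P' Q' = bprod (P <#> P') (Q <#> Q')"
proof (intro equalityI subsetI)
  fix x assume "x \<in> bprod P Q <#>\<^bsub>W\<^esub> bprod P' Q'"
  then obtain a b c d where "a \<in> P" "b \<in> Q" "c \<in> P'" "d \<in> Q'"
    and "x = ((a, b), False) \<otimes>\<^bsub>W\<^esub> ((c, d), False)"
    unfolding set_mult_def bprod_def by blast
  then show "x \<in> bprod (P <#> P') (Q <#> Q')"
    by (simp add: set_mult_memI)
next
  fix x assume "x \<in> bprod (P <#> P') (Q <#> Q')"
  then obtain a b c d where abcd: "a \<in> P" "b \<in> Q" "c \<in> P'" "d \<in> Q'"
    and "x = ((a, b), False) \<otimes>\<^bsub>W\<^esub> ((c, d), False)"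
    unfolding set_mult_def bprod_def by auto
  then show "x \<in> bprod P Q <#>\<^bsub>W\<^esub> bprod P' Q'"
    using set_mult_memI[of "((a, b), False)" "bprod P Q" "((c, d), False)" "bprod P' Q'" W]
    by simp
qed

lemma bprod_set_mult_swap2:
  assumes "C \<subseteq> carrier T"
  shows "bprod C C <#>\<^bsub>W\<^esub> {\<one>\<^bsub>W\<^esub>, swap2 T} = sub_wreath2 C"
proof (intro equalityI subsetI)
  fix x assume "x \<in> bprod C C <#>\<^bsub>W\<^esub> {\<one>\<^bsub>W\<^esub>, swap2 T}"
  then obtain a b k where "a \<in> C" "b \<in> C" "k \<in> {\<one>\<^bsub>W\<^esub>, swap2 T}"
    and "x = ((a, b), False) \<otimes>\<^bsub>W\<^esub> k"
    unfolding set_mult_def bprod_def by blast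
  moreover have "a \<in> carrier T" "b \<in> carrier T"
    using \<open>a \<in> C\<close> \<open>b \<in> C\<close> assms by auto
  ultimately show "x \<in> sub_wreath2 C"
    by (auto simp: swap2_def)
next
  fix x assume "x \<in> sub_wreath2 C"
  then obtain a b s where ab: "a \<in> C" "b \<in> C" and x: "x = ((a, b), s)"
    by (cases x) auto
  then have "x = ((a, b), False) \<otimes>\<^bsub>W\<^esub> (if s then swap2 T else \<one>\<^bsub>W\<^esub>)"
    using assms by (auto simp: swap2_def subsetD)
  then show "x \<in> bprod C C <#>\<^bsub>W\<^esub> {\<one>\<^bsub>W\<^esub>, swap2 T}"
    by (simp only:) (intro set_mult_memI; use ab in auto)
qed

lemma base2_set_mult_sub_wreath2:
  assumes C: "subgroup C T"
  shows "base2 T <#>\<^bsub>W\<^esub> sub_wreath2 C = carrier W"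
proof
  show "base2 T <#>\<^bsub>W\<^esub> sub_wreath2 C \<subseteq> carrier W"
    using subgroup.subset[OF subgroup_base2] subgroup.subset[OF subgroup_sub_wreath2[OF C]]
    by (rule W.setmult_subset_G)
  show "carrier W \<subseteq> base2 T <#>\<^bsub>W\<^esub> sub_wreath2 C"
  proof
    fix x assume "x \<in> carrier W"
    then obtain a b s where "a \<in> carrier T" "b \<in> carrier T"
      and "x = ((a, b), False) \<otimes>\<^bsub>W\<^esub> ((\<one>, \<one>), s)"
      by (cases x) auto
    then show "x \<in> base2 T <#>\<^bsub>W\<^esub> sub_wreath2 C"
      using set_mult_memI[of "((a, b), False)" "base2 T" "((\<one>, \<one>), s)" "sub_wreath2 C" W]
        subgroup.one_closed[OF C] by (simp add: base2_def)
  qed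
qed

lemma base2_Int_sub_wreath2:
  assumes "C \<subseteq> carrier T"
  shows "base2 T \<inter> sub_wreath2 C = bprod C C"
  using assms by (auto simp: base2_def sub_wreath2_def bprod_def)

lemma generate_base2_factors:
  "generate W (bprod (carrier T) {\<one>} \<union> bprod {\<one>} (carrier T)) = base2 T"
proof (rule W.generateI[symmetric, OF subgroup_base2])
  show "bprod (carrier T) {\<one>} \<union> bprod {\<one>} (carrier T) \<subseteq> base2 T"
    by (auto simp: base2_def bprod_def)
  fix K assume K: "subgroup K W" "bprod (carrier T) {\<one>} \<union> bprod {\<one>} (carrier T) \<subseteq> K"
  show "base2 T \<subseteq> K"
  proof
    fix m assume "m \<in> base2 T"
    then obtain u v where m: "m = ((u, v), False)" "u \<in> carrier T" "v \<in> carrier T"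
      by (auto simp: base2_def)
    then have "((u, \<one>), False) \<otimes>\<^bsub>W\<^esub> ((\<one>, v), False) \<in> K"
      using K by (intro subgroup.m_closed[OF K(1)]) auto
    then show "m \<in> K"
      using m by simp
  qed
qed

lemma conj_sub_wreath2_bprod_subset:
  assumes P: "subgroup P T" and Q: "subgroup Q T" and CP: "C \<subseteq> P" and CQ: "C \<subseteq> Q"
    and g: "g \<in> sub_wreath2 C"
  shows "(\<lambda>k. g \<otimes>\<^bsub>W\<^esub> k \<otimes>\<^bsub>W\<^esub> inv\<^bsub>W\<^esub> g) ` bprod P Q
    \<subseteq> (if snd g then bprod Q P else bprod P Q)"
proof
  have conj_closed: "c \<otimes> h \<otimes> inv c \<in> H" if "subgroup H T" "c \<in> H" "h \<in> H" for H c h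
    using that by (simp add: subgroup.m_closed subgroup.m_inv_closed)
  fix y assume "y \<in> (\<lambda>k. g \<otimes>\<^bsub>W\<^esub> k \<otimes>\<^bsub>W\<^esub> inv\<^bsub>W\<^esub> g) ` bprod P Q"
  then obtain p q where pq: "p \<in> P" "q \<in> Q"
    and y: "y = g \<otimes>\<^bsub>W\<^esub> ((p, q), False) \<otimes>\<^bsub>W\<^esub> inv\<^bsub>W\<^esub> g"
    by (auto simp: bprod_def)
  obtain c d s where g_eq: "g = ((c, d), s)"
    by (metis surj_pair)
  then have cd: "c \<in> P \<inter> Q" "d \<in> P \<inter> Q"
    using g CP CQ by auto
  have "c \<in> carrier T" "d \<in> carrier T" "p \<in> carrier T" "q \<in> carrier T"
    using cd pq subgroup.mem_carrier[OF P] subgroup.mem_carrier[OF Q] by auto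
  then have "y = (if s then ((c \<otimes> q \<otimes> inv c, d \<otimes> p \<otimes> inv d), False)
                  else ((c \<otimes> p \<otimes> inv c, d \<otimes> q \<otimes> inv d), False))"
    using y g_eq by simp
  then show "y \<in> (if snd g then bprod Q P else bprod P Q)"
    using g_eq cd pq conj_closed[OF P] conj_closed[OF Q] by simp
qed

lemma conj_sub_wreath2_bprod:
  assumes P: "subgroup P T" and Q: "subgroup Q T" and C: "subgroup C T"
    and CP: "C \<subseteq> P" and CQ: "C \<subseteq> Q" and g: "g \<in> sub_wreath2 C"
  shows "(\<lambda>k. g \<otimes>\<^bsub>W\<^esub> k \<otimes>\<^bsub>W\<^esub> inv\<^bsub>W\<^esub> g) ` bprod P Q
    = (if snd g then bprod Q P else bprod P Q)"
proof (rule W.conj_image_eqI)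
  have sub: "subgroup (sub_wreath2 C) W"
    by (rule subgroup_sub_wreath2[OF C])
  show gc: "g \<in> carrier W"
    by (rule subgroup.mem_carrier[OF sub g])
  show "bprod P Q \<subseteq> carrier W" "(if snd g then bprod Q P else bprod P Q) \<subseteq> carrier W"
    using subgroup.subset[OF subgroup_bprod[OF P Q]] subgroup.subset[OF subgroup_bprod[OF Q P]]
    by auto
  show "(\<lambda>k. g \<otimes>\<^bsub>W\<^esub> k \<otimes>\<^bsub>W\<^esub> inv\<^bsub>W\<^esub> g) ` bprod P Q
    \<subseteq> (if snd g then bprod Q P else bprod P Q)"
    by (rule conj_sub_wreath2_bprod_subset[OF P Q CP CQ g])
  have ig: "inv\<^bsub>W\<^esub> g \<in> sub_wreath2 C"
    by (rule subgroup.m_inv_closed[OF sub g])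
  have "snd (inv\<^bsub>W\<^esub> g) = snd g"
    using gc by (cases g) (auto split: if_splits)
  then show "(\<lambda>k. inv\<^bsub>W\<^esub> g \<otimes>\<^bsub>W\<^esub> k \<otimes>\<^bsub>W\<^esub> g) ` (if snd g then bprod Q P else bprod P Q)
    \<subseteq> bprod P Q"
    using conj_sub_wreath2_bprod_subset[OF Q P CQ CP ig] conj_sub_wreath2_bprod_subset[OF P Q CP CQ ig]
      gc by (cases "snd g") auto
qed

lemma conj_swap2_bprod_diag:
  assumes "subgroup C T"
  shows "(\<lambda>k. swap2 T \<otimes>\<^bsub>W\<^esub> k \<otimes>\<^bsub>W\<^esub> inv\<^bsub>W\<^esub> swap2 T) ` bprod C C = bprod C C"
  using conj_sub_wreath2_bprod[OF assms assms assms order_refl order_refl, of "swap2 T"]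
    subgroup.one_closed[OF assms] by (simp add: swap2_def)

lemma transitive_on_base2:
  "subgroup C T \<Longrightarrow> transitive_on (base2 T) (lcosets\<^bsub>W\<^esub> (sub_wreath2 C)) (coset_action W (sub_wreath2 C))"
  by (rule W.coset_action_transitive_on[OF subgroup_sub_wreath2 subgroup_base2 base2_set_mult_sub_wreath2])

end

section \<open>Normal subgroups of the base group\<close>

context wreath2_group
begin

lemma normal_base2_group_iff:
  "N \<lhd> base2_group T \<longleftrightarrow> subgroup N W \<and> N \<subseteq> base2 T \<and>
     (\<forall>m\<in>base2 T. \<forall>h\<in>N. m \<otimes>\<^bsub>W\<^esub> h \<otimes>\<^bsub>W\<^esub> inv\<^bsub>W\<^esub> m \<in> N)"
proof -
  interpret M: group "base2_group T"
    by (rule group_base2_group)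
  have "subgroup N (base2_group T) \<longleftrightarrow> subgroup N W \<and> N \<subseteq> base2 T"
  proof
    assume N: "subgroup N (base2_group T)"
    show "subgroup N W \<and> N \<subseteq> base2 T"
      using W.incl_subgroup[OF subgroup_base2 N] subgroup.subset[OF N] by simp
  next
    assume "subgroup N W \<and> N \<subseteq> base2 T"
    then show "subgroup N (base2_group T)"
      using W.subgroup_incl[OF _ subgroup_base2] by blast
  qed
  moreover have "inv\<^bsub>base2_group T\<^esub> m = inv\<^bsub>W\<^esub> m" if "m \<in> base2 T" for m
    using W.m_inv_consistent[OF subgroup_base2 that] .
  ultimately show ?thesis
    unfolding M.normal_inv_iff by auto
qed

lemma normal_bprod:
  assumes P: "P \<lhd> T" and Q: "Q \<lhd> T"
  shows "bprod P Q \<lhd> base2_group T"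
  unfolding normal_base2_group_iff
proof (intro conjI ballI)
  show "subgroup (bprod P Q) W"
    using subgroup_bprod[OF normal_imp_subgroup[OF P] normal_imp_subgroup[OF Q]] .
  show "bprod P Q \<subseteq> base2 T"
    using subgroup.subset[OF normal_imp_subgroup[OF P]] subgroup.subset[OF normal_imp_subgroup[OF Q]]
    by (auto simp: base2_def bprod_def)
  fix m h assume "m \<in> base2 T" "h \<in> bprod P Q"
  then obtain x y a b where "m = ((x, y), False)" "x \<in> carrier T" "y \<in> carrier T"
    and "h = ((a, b), False)" "a \<in> P" "b \<in> Q"
    by (auto simp: base2_def bprod_def)
  then show "m \<otimes>\<^bsub>W\<^esub> h \<otimes>\<^bsub>W\<^esub> inv\<^bsub>W\<^esub> m \<in> bprod P Q"
    using P Q by (simp add: normal.inv_op_closed2 subgroup.mem_carrier[OF normal_imp_subgroup])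
qed

lemma group_hom_base2_fst: "group_hom (base2_group T) T (\<lambda>x. fst (fst x))"
  by (intro group_hom.intro group_hom_axioms.intro group_base2_group T.is_group homI)
     (auto simp: base2_def)

lemma group_hom_base2_snd: "group_hom (base2_group T) T (\<lambda>x. snd (fst x))"
  by (intro group_hom.intro group_hom_axioms.intro group_base2_group T.is_group homI)
     (auto simp: base2_def)

lemma normal_image_fst:
  "N \<lhd> base2_group T \<Longrightarrow> (\<lambda>x. fst (fst x)) ` N \<lhd> T"
  using image_fst_bprod[of "carrier T" "carrier T"]
  by (intro normal.surj_hom_normal_subgroup[OF _ group_hom_base2_fst]) (auto simp: base2_eq_bprod)

lemma normal_image_snd:
  "N \<lhd> base2_group T \<Longrightarrow> (\<lambda>x. snd (fst x)) ` N \<lhd> T"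
  using image_snd_bprod[of "carrier T" "carrier T"]
  by (intro normal.surj_hom_normal_subgroup[OF _ group_hom_base2_snd]) (auto simp: base2_eq_bprod)

lemma normal_base2_group_trivial:
  assumes T: "simple_group T" and N: "N \<lhd> base2_group T" and NPQ: "N \<subseteq> bprod P Q"
    and P: "P \<subset> carrier T" and Q: "Q \<subset> carrier T"
  shows "N = {\<one>\<^bsub>W\<^esub>}"
proof -
  have "(\<lambda>x. fst (fst x)) ` N \<subseteq> P" "(\<lambda>x. snd (fst x)) ` N \<subseteq> Q"
    using NPQ by (auto simp: bprod_def)
  then have fst_N: "(\<lambda>x. fst (fst x)) ` N = {\<one>}" and snd_N: "(\<lambda>x. snd (fst x)) ` N = {\<one>}"
    using simple_group.no_real_normal_subgroup[OF T normal_image_fst[OF N]]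
      simple_group.no_real_normal_subgroup[OF T normal_image_snd[OF N]] P Q by auto
  have "N \<subseteq> base2 T"
    using N unfolding normal_base2_group_iff by blast
  then have "N \<subseteq> {\<one>\<^bsub>W\<^esub>}"
    using fst_N snd_N by (force simp: base2_def)
  moreover have "\<one>\<^bsub>W\<^esub> \<in> N"
    using subgroup.one_closed[OF normal_imp_subgroup[OF N]] by simp
  ultimately show ?thesis
    by blast
qed

lemma first_factor_subset_normal:
  assumes T: "simple_group T" and L: "L \<lhd> W" and LM: "L \<subseteq> base2 T"
    and c: "((c, \<one>), False) \<in> L" "c \<noteq> \<one>"
  shows "bprod (carrier T) {\<one>} \<subseteq> L"
proof
  let ?F = "bprod (carrier T) {\<one>}"
  have "L \<inter> ?F \<lhd> base2_group T"
    using group.normal_subgroup_intersect[OF group_base2_group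
        W.normal_restrict_supergroup[OF subgroup_base2 L LM]
        normal_bprod[OF T.normal_self T.one_is_normal]] .
  then have "(\<lambda>x. fst (fst x)) ` (L \<inter> ?F) \<lhd> T"
    by (rule normal_image_fst)
  moreover have "((c, \<one>), False) \<in> L \<inter> ?F"
    using c LM by (auto simp: base2_def)
  then have "c \<in> (\<lambda>x. fst (fst x)) ` (L \<inter> ?F)"
    by (rule rev_image_eqI) simp
  ultimately have proj: "(\<lambda>x. fst (fst x)) ` (L \<inter> ?F) = carrier T"
    using simple_group.no_real_normal_subgroup[OF T] c(2) by blast
  fix x assume x: "x \<in> ?F"
  then obtain y where "y \<in> L" "y \<in> ?F" "fst (fst x) = fst (fst y)"
    using proj by (force simp: bprod_def)
  with x have "x = y"
    by (auto simp: bprod_def)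
  with \<open>y \<in> L\<close> show "x \<in> L"
    by simp
qed

lemma normal_base2_eq_if_first_factor:
  assumes T: "simple_group T" and L: "L \<lhd> W" and LM: "L \<subseteq> base2 T"
    and c: "((c, \<one>), False) \<in> L" "c \<noteq> \<one>"
  shows "L = base2 T"
proof
  have first: "bprod (carrier T) {\<one>} \<subseteq> L"
    by (rule first_factor_subset_normal[OF T L LM c])
  have "((\<one>, v), False) \<in> L" if v: "v \<in> carrier T" for v
  proof -
    have "swap2 T \<otimes>\<^bsub>W\<^esub> ((v, \<one>), False) \<otimes>\<^bsub>W\<^esub> inv\<^bsub>W\<^esub> swap2 T \<in> L"
      using v first by (intro normal.inv_op_closed2[OF L swap2_carrier]) auto
    then show ?thesis
      using v by simp
  qed
  then have "bprod (carrier T) {\<one>} \<union> bprod {\<one>} (carrier T) \<subseteq> L"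
    using first by (auto simp: bprod_def)
  then show "base2 T \<subseteq> L"
    using W.generate_subgroup_incl[OF _ normal_imp_subgroup[OF L]] generate_base2_factors by blast
qed (rule LM)

lemma normal_subset_base2_eq:
  assumes T: "simple_group T" and nc: "\<not> comm_group T"
    and L: "L \<lhd> W" and LM: "L \<subseteq> base2 T" and nontriv: "L \<noteq> {\<one>\<^bsub>W\<^esub>}"
  shows "L = base2 T"
proof -
  have Ls: "subgroup L W"
    by (rule normal_imp_subgroup[OF L])
  have elem: "\<exists>a b. x = ((a, b), False) \<and> a \<in> carrier T \<and> b \<in> carrier T" if "x \<in> L" for x
    using that LM by (auto simp: base2_def)
  obtain a b where ab: "((a, b), False) \<in> L" "a \<noteq> \<one>" "a \<in> carrier T" "b \<in> carrier T"
  proof -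
    obtain x where x: "x \<in> L" "x \<noteq> \<one>\<^bsub>W\<^esub>"
      using nontriv subgroup.one_closed[OF Ls] by blast
    then obtain a b where x_eq: "x = ((a, b), False)" and abc: "a \<in> carrier T" "b \<in> carrier T"
      using elem by blast
    have "swap2 T \<otimes>\<^bsub>W\<^esub> x \<otimes>\<^bsub>W\<^esub> inv\<^bsub>W\<^esub> swap2 T \<in> L"
      by (rule normal.inv_op_closed2[OF L swap2_carrier x(1)])
    then have "((b, a), False) \<in> L"
      using x_eq abc by simp
    then show thesis
      using that x x_eq abc by (cases "a = \<one>") auto
  qed
  obtain t where t: "t \<in> carrier T" "a \<otimes> t \<noteq> t \<otimes> a"
    using simple_group.center_trivial[OF T nc] ab(2,3) by (auto simp: center_def)
  have "((a, b), False) \<otimes>\<^bsub>W\<^esub>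
      (((t, \<one>), False) \<otimes>\<^bsub>W\<^esub> inv\<^bsub>W\<^esub> ((a, b), False) \<otimes>\<^bsub>W\<^esub> inv\<^bsub>W\<^esub> ((t, \<one>), False)) \<in> L"
    using ab t subgroup.m_inv_closed[OF Ls ab(1)]
    by (intro subgroup.m_closed[OF Ls] normal.inv_op_closed2[OF L]) auto
  then have "((a \<otimes> (t \<otimes> inv a \<otimes> inv t), \<one>), False) \<in> L"
    using ab t by simp
  moreover have "a \<otimes> (t \<otimes> inv a \<otimes> inv t) \<noteq> \<one>"
    using T.commutator_eq_one_iff[OF ab(3) t(1)] t(2) by simp
  ultimately show ?thesis
    by (rule normal_base2_eq_if_first_factor[OF T L LM])
qed

lemma minimal_normal_base2:
  assumes T: "simple_group T" and nc: "\<not> comm_group T"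
  shows "minimal_normal (base2 T) W"
  unfolding minimal_normal_def
proof (intro conjI allI impI)
  show "base2 T \<lhd> W"
    by (rule normal_base2)
  obtain a where "a \<in> carrier T" "a \<noteq> \<one>"
    using simple_group.simple_not_triv[OF T] T.one_closed by blast
  then have "((a, a), False) \<in> base2 T" "((a, a), False) \<noteq> \<one>\<^bsub>W\<^esub>"
    by (auto simp: base2_def)
  then show "base2 T \<noteq> {\<one>\<^bsub>W\<^esub>}"
    by blast
next
  fix L assume "L \<lhd> W \<and> L \<subseteq> base2 T"
  then show "L = {\<one>\<^bsub>W\<^esub>} \<or> L = base2 T"
    using normal_subset_base2_eq[OF T nc] by blast
qed

end

section \<open>Cartesian systems\<close>

lemma M_normal_doubleton_iff:
  assumes "K \<noteq> K'"
  shows "M_normal G \<phi> M w {K, K'} \<longleftrightarrow>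
    (\<exists>N N'. N \<subseteq> M \<and> N \<lhd> G\<lparr>carrier := M\<rparr> \<and> N' \<subseteq> M \<and> N' \<lhd> G\<lparr>carrier := M\<rparr> \<and>
      generate G (N \<union> N') = M \<and>
      N \<inter> generate G N' = {\<one>\<^bsub>G\<^esub>} \<and> N' \<inter> generate G N = {\<one>\<^bsub>G\<^esub>} \<and>
      K = (N \<inter> (M \<inter> stabilizer G \<phi> w)) <#>\<^bsub>G\<^esub> generate G N' \<and>
      K' = (N' \<inter> (M \<inter> stabilizer G \<phi> w)) <#>\<^bsub>G\<^esub> generate G N)"
  (is "_ \<longleftrightarrow> (\<exists>N N'. ?P N N')")
proof -
  have diff: "{K, K'} - {K} = {K'}" "{K, K'} - {K'} = {K}"
    using assms by auto
  have "M_normal G \<phi> M w {K, K'} \<longleftrightarrow> (\<exists>f. ?P (f K) (f K'))"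
    unfolding M_normal_def ball_simps(5,7) diff by (simp add: conj_assoc)
  also have "\<dots> \<longleftrightarrow> (\<exists>N N'. ?P N N')"
  proof
    assume "\<exists>f. ?P (f K) (f K')"
    then show "\<exists>N N'. ?P N N'"
    proof (elim exE)
      fix f assume "?P (f K) (f K')"
      then show "\<exists>N N'. ?P N N'"
        by (intro exI)
    qed
  next
    assume "\<exists>N N'. ?P N N'"
    then show "\<exists>f. ?P (f K) (f K')"
    proof (elim exE)
      fix N N' assume "?P N N'"
      then show "\<exists>f. ?P (f K) (f K')"
        using assms by (intro exI[of _ "\<lambda>L. if L = K then N else N'"]) simp
    qed
  qed
  finally show ?thesis .
qed

context wreath2_group
begin

lemma stabilizer_sub_wreath2:
  "subgroup C T \<Longrightarrow> stabilizer W (coset_action W (sub_wreath2 C)) (sub_wreath2 C) = sub_wreath2 C"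
  by (rule W.stabilizer_coset_action[OF subgroup_sub_wreath2])

lemma cartesian_system_bprod_pair:
  assumes P: "subgroup P T" and Q: "subgroup Q T" and PQ: "P <#> Q = carrier T"
  shows "cartesian_system W (coset_action W (sub_wreath2 (P \<inter> Q))) (base2 T) (sub_wreath2 (P \<inter> Q))
           {bprod P Q, bprod Q P}"
proof -
  have C: "subgroup (P \<inter> Q) T"
    by (rule T.subgroups_Inter_pair[OF P Q])
  have sub: "bprod P Q \<subseteq> base2 T" "bprod Q P \<subseteq> base2 T"
    using subgroup.subset[OF P] subgroup.subset[OF Q] by (auto simp: base2_def bprod_def)
  have prod: "bprod P Q <#>\<^bsub>W\<^esub> bprod Q P = base2 T" "bprod Q P <#>\<^bsub>W\<^esub> bprod P Q = base2 T"
    using PQ T.set_mult_eq_carrier_commute[OF P Q PQ] by (simp_all add: bprod_set_mult base2_eq_bprod)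
  have conj: "(\<lambda>k. g \<otimes>\<^bsub>W\<^esub> k \<otimes>\<^bsub>W\<^esub> inv\<^bsub>W\<^esub> g) ` K \<in> {bprod P Q, bprod Q P}"
    if g: "g \<in> sub_wreath2 (P \<inter> Q)" and K: "K \<in> {bprod P Q, bprod Q P}" for g K
  proof -
    have "(\<lambda>k. g \<otimes>\<^bsub>W\<^esub> k \<otimes>\<^bsub>W\<^esub> inv\<^bsub>W\<^esub> g) ` bprod P Q \<in> {bprod P Q, bprod Q P}"
      "(\<lambda>k. g \<otimes>\<^bsub>W\<^esub> k \<otimes>\<^bsub>W\<^esub> inv\<^bsub>W\<^esub> g) ` bprod Q P \<in> {bprod P Q, bprod Q P}"
      by (simp_all add: conj_sub_wreath2_bprod[OF P Q C Int_lower1 Int_lower2 g]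
          conj_sub_wreath2_bprod[OF Q P C Int_lower2 Int_lower1 g])
    then show ?thesis
      using K by blast
  qed
  have "\<Inter>{bprod P Q, bprod Q P} = base2 T \<inter> sub_wreath2 (P \<inter> Q)"
    using subgroup.subset[OF C] by (auto simp: base2_Int_sub_wreath2 bprod_Int Int_commute)
  moreover have "K <#>\<^bsub>W\<^esub> (base2 T \<inter> \<Inter>({bprod P Q, bprod Q P} - {K})) = base2 T"
    if "K \<in> {bprod P Q, bprod Q P}" for K
    using that W.set_mult_Int_Inter_other[OF subgroup_base2 sub prod(1)]
      W.set_mult_Int_Inter_other[OF subgroup_base2 sub(2,1) prod(2)]
    by (auto simp: insert_commute)
  ultimately show ?thesis
    unfolding cartesian_system_def stabilizer_sub_wreath2[OF C]
    using subgroup_bprod[OF P Q] subgroup_bprod[OF Q P] sub conj by auto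
qed

lemma factor_subset_set_mult:
  assumes H: "subgroup H W" and N: "N \<lhd> base2_group T" "N' \<lhd> base2_group T"
    and K: "K = (N \<inter> (base2 T \<inter> H)) <#>\<^bsub>W\<^esub> generate W N'"
  shows "N' \<subseteq> K"
proof
  fix x assume x: "x \<in> N'"
  have "\<one>\<^bsub>W\<^esub> \<in> N \<inter> (base2 T \<inter> H)"
    using subgroup.one_closed[OF normal_imp_subgroup[OF N(1)]]
      subgroup.one_closed[OF subgroup_base2] subgroup.one_closed[OF H] by simp
  then have "\<one>\<^bsub>W\<^esub> \<otimes>\<^bsub>W\<^esub> x \<in> K"
    unfolding K using x by (intro set_mult_memI generate.incl)
  moreover have "x \<in> carrier W"
    using x subgroup.subset[OF normal_imp_subgroup[OF N(2)]] subgroup.subset[OF subgroup_base2]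
    by auto
  ultimately show "x \<in> K"
    by (metis W.l_one)
qed

lemma not_M_normal_bprod_pair:
  assumes T: "simple_group T" and H: "subgroup H W"
    and P: "subgroup P T" "P \<noteq> carrier T" and Q: "subgroup Q T" "Q \<noteq> carrier T"
    and PQ: "P \<noteq> Q"
  shows "\<not> M_normal W (coset_action W H) (base2 T) H {bprod P Q, bprod Q P}"
proof
  assume M_normal: "M_normal W (coset_action W H) (base2 T) H {bprod P Q, bprod Q P}"
  have PQ_sub: "P \<subset> carrier T" "Q \<subset> carrier T"
    using subgroup.subset[OF P(1)] subgroup.subset[OF Q(1)] P(2) Q(2) by auto
  have ne: "bprod P Q \<noteq> bprod Q P"
    using PQ bprod_swap_eq_iff[of P Q] subgroup.one_closed[OF P(1)] subgroup.one_closed[OF Q(1)]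
    by auto
  obtain N N' where N: "N \<lhd> base2_group T" "N' \<lhd> base2_group T"
    and gen: "generate W (N \<union> N') = base2 T"
    and K: "bprod P Q = (N \<inter> (base2 T \<inter> H)) <#>\<^bsub>W\<^esub> generate W N'"
      "bprod Q P = (N' \<inter> (base2 T \<inter> H)) <#>\<^bsub>W\<^esub> generate W N"
    using M_normal unfolding M_normal_doubleton_iff[OF ne] W.stabilizer_coset_action[OF H] by blast
  have "N = {\<one>\<^bsub>W\<^esub>}" "N' = {\<one>\<^bsub>W\<^esub>}"
    using normal_base2_group_trivial[OF T N(1) factor_subset_set_mult[OF H N(2,1) K(2)] PQ_sub(2,1)]
      normal_base2_group_trivial[OF T N(2) factor_subset_set_mult[OF H N K(1)] PQ_sub] .
  then have "base2 T \<subseteq> {\<one>\<^bsub>W\<^esub>}"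
    using gen W.generate_subgroup_incl[OF order_refl W.triv_subgroup] by simp
  moreover obtain a where "a \<in> carrier T" "a \<noteq> \<one>"
    using PQ_sub(1) subgroup.one_closed[OF P(1)] by blast
  ultimately show False
    by (auto simp: base2_def)
qed

lemma M_normal_bprod_carrier_pair:
  assumes C: "subgroup C T" "C \<noteq> carrier T"
  shows "M_normal W (coset_action W (sub_wreath2 C)) (base2 T) (sub_wreath2 C)
           {bprod C (carrier T), bprod (carrier T) C}"
proof -
  let ?F1 = "bprod (carrier T) {\<one>}" and ?F2 = "bprod {\<one>} (carrier T)"
  have Cc: "C \<subseteq> carrier T" and C1: "\<one> \<in> C"
    using subgroup.subset[OF C(1)] subgroup.one_closed[OF C(1)] .
  have ne: "bprod C (carrier T) \<noteq> bprod (carrier T) C"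
    using C bprod_swap_eq_iff[of C "carrier T"] C1 by auto
  have "?F1 \<lhd> base2_group T" "?F2 \<lhd> base2_group T"
    by (simp_all add: normal_bprod T.normal_self T.one_is_normal)
  moreover have "?F1 \<subseteq> base2 T" "?F2 \<subseteq> base2 T"
    by (auto simp: base2_def bprod_def)
  moreover have "generate W ?F1 = ?F1" "generate W ?F2 = ?F2"
    by (simp_all add: W.generate_subgroup_eq subgroup_bprod T.subgroup_self T.triv_subgroup)
  moreover have "?F1 \<inter> ?F2 = {\<one>\<^bsub>W\<^esub>}" "?F2 \<inter> ?F1 = {\<one>\<^bsub>W\<^esub>}"
    by (auto simp: bprod_def)
  moreover have "?F1 \<inter> (base2 T \<inter> sub_wreath2 C) = bprod C {\<one>}"
    "?F2 \<inter> (base2 T \<inter> sub_wreath2 C) = bprod {\<one>} C"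
    using Cc C1 by (auto simp: base2_def sub_wreath2_def bprod_def)
  moreover have "bprod C {\<one>} <#>\<^bsub>W\<^esub> ?F2 = bprod C (carrier T)"
    "bprod {\<one>} C <#>\<^bsub>W\<^esub> ?F1 = bprod (carrier T) C"
    using Cc by (simp_all add: bprod_set_mult T.set_mult_one_right T.set_mult_one_left)
  ultimately show ?thesis
    unfolding M_normal_doubleton_iff[OF ne] stabilizer_sub_wreath2[OF C(1)]
    using generate_base2_factors by (intro exI[of _ ?F1] exI[of _ ?F2]) simp
qed

end

theorem mainTheorem11:
  fixes T :: "'a monoid" and A B :: "'a set"
  assumes "simple_group T" and "finite (carrier T)" and "\<not> comm_group T"
    and "subgroup A T" and "A \<noteq> carrier T"
    and "subgroup B T" and "B \<noteq> carrier T"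
    and "A <#>\<^bsub>T\<^esub> B = carrier T"
  defines "G \<equiv> wreath2 T"
    and "M \<equiv> base2 T"
    and "s \<equiv> swap2 T"
    and "K1 \<equiv> bprod A B"
    and "K2 \<equiv> bprod B A"
    and "H \<equiv> (bprod A B \<inter> bprod B A) <#>\<^bsub>wreath2 T\<^esub> {\<one>\<^bsub>wreath2 T\<^esub>, swap2 T}"
    and "\<Omega> \<equiv> lcosets\<^bsub>wreath2 T\<^esub> ((bprod A B \<inter> bprod B A) <#>\<^bsub>wreath2 T\<^esub> {\<one>\<^bsub>wreath2 T\<^esub>, swap2 T})"
    and "\<phi> \<equiv> coset_action (wreath2 T) ((bprod A B \<inter> bprod B A) <#>\<^bsub>wreath2 T\<^esub> {\<one>\<^bsub>wreath2 T\<^esub>, swap2 T})"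
    and "\<sigma>1 \<equiv> (\<lambda>x :: ('a \<times> 'a) \<times> bool. fst (fst x))"
    and "\<sigma>2 \<equiv> (\<lambda>x :: ('a \<times> 'a) \<times> bool. snd (fst x))"
  shows "K1 \<inter> K2 = bprod (A \<inter> B) (A \<inter> B)
    \<and> (\<lambda>k. s \<otimes>\<^bsub>G\<^esub> k \<otimes>\<^bsub>G\<^esub> inv\<^bsub>G\<^esub> s) ` (K1 \<inter> K2) = K1 \<inter> K2
    \<and> transitive_action G \<Omega> \<phi>
    \<and> minimal_normal M G \<and> transitive_on M \<Omega> \<phi>
    \<and> (cartesian_system G \<phi> M H {K1, K2}
       \<and> \<not> M_normal G \<phi> M H {K1, K2}
       \<and> card {\<sigma>1 ` K | K. K \<in> {K1, K2} \<and> \<sigma>1 ` K \<noteq> carrier T} = 2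
       \<and> card {\<sigma>2 ` K | K. K \<in> {K1, K2} \<and> \<sigma>2 ` K \<noteq> carrier T} = 2)
    \<and> (cartesian_system G \<phi> M H {bprod (A \<inter> B) (carrier T), bprod (carrier T) (A \<inter> B)}
       \<and> M_normal G \<phi> M H {bprod (A \<inter> B) (carrier T), bprod (carrier T) (A \<inter> B)})"
proof -
  interpret T: simple_group T by fact
  interpret wreath2_group T ..
  let ?C = "A \<inter> B"
  have C: "subgroup ?C T" and C_proper: "?C \<noteq> carrier T"
    using T.subgroups_Inter_pair[OF assms(4,6)] assms(5) subgroup.subset[OF assms(4)] by auto
  have "A \<noteq> B"
    using assms(5,8) T.subgroup_mult_id[OF assms(4)] by auto
  have "A \<noteq> {}" "B \<noteq> {}"
    using subgroup.one_closed[OF assms(4)] subgroup.one_closed[OF assms(6)] by auto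
  have K12: "bprod A B \<inter> bprod B A = bprod ?C ?C"
    by (simp add: bprod_Int Int_commute)
  have H: "bprod ?C ?C <#>\<^bsub>W\<^esub> {\<one>\<^bsub>W\<^esub>, swap2 T} = sub_wreath2 ?C"
    using subgroup.subset[OF C] by (rule bprod_set_mult_swap2)
  show ?thesis
    unfolding assms(9-18) K12 H
    using conj_swap2_bprod_diag[OF C]
      W.coset_action_transitive[OF subgroup_sub_wreath2[OF C]]
      minimal_normal_base2[OF assms(1,3)]
      transitive_on_base2[OF C]
      cartesian_system_bprod_pair[OF assms(4,6,8)]
      not_M_normal_bprod_pair[OF assms(1) subgroup_sub_wreath2[OF C] assms(4,5,6,7) \<open>A \<noteq> B\<close>]
      card_coordinate_images[OF \<open>A \<noteq> {}\<close> \<open>B \<noteq> {}\<close> assms(5,7) \<open>A \<noteq> B\<close>]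
      cartesian_system_bprod_pair[OF C T.subgroup_self T.subgroup_set_mult_carrier[OF C]]
      M_normal_bprod_carrier_pair[OF C C_proper]
    by (simp add: Int_absorb2 subgroup.subset[OF C])
qed

end
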